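(* The set of $s$-practical numbers has asymptotic density $0$.
   Context: $s(n)=\sigma(n)-n$ is the sum of proper divisors of $n$, and $S_s(n)=\sum_{d\mid n}s(d)$. A positive integer $n$ is $s$-practical if every positive integer $m\le S_s(n)$ equals $\sum_{d\in\mathcal{D}}s(d)$ for some set $\mathcal{D}$ of distinct positive divisors of $n$. *)

theory Defs
  imports "HOL-Analysis.Analysis"
begin

definition divisors_set :: "nat \<Rightarrow> nat set" where
  "divisors_set n = {d. d dvd n \<and> 0 < d}"

definition sigma_fn :: "nat \<Rightarrow> nat" where
  "sigma_fn n = (\<Sum>d\<in>divisors_set n. d)"

definition s_fn :: "nat \<Rightarrow> nat" where
  "s_fn n = sigma_fn n - n"

definition S_s :: "nat \<Rightarrow> nat" where
  "S_s n = (\<Sum>d\<in>divisors_set n. s_fn d)"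

definition s_practical :: "nat \<Rightarrow> bool" where
  "s_practical n \<longleftrightarrow> 0 < n \<and>
     (\<forall>m. 0 < m \<and> m \<le> S_s n \<longrightarrow>
        (\<exists>D. D \<subseteq> divisors_set n \<and> m = (\<Sum>d\<in>D. s_fn d)))"

end

theory Submission
  imports Defs "HOL-Computational_Algebra.Primes" "HOL-Real_Asymp.Real_Asymp"
begin

text \<open>If \<open>n\<close> is \<open>s\<close>-practical, the \<open>2 ^ \<tau>(n)\<close> subset sums of \<open>s\<close> over the divisors of
  \<open>n\<close> cover \<open>1, \<dots>, S\<^sub>s(n)\<close>; if \<open>n = d e\<close> is moreover composite, then
  \<open>n \<le> s(n)\<^sup>2 \<le> S\<^sub>s(n)\<^sup>2\<close>. Hence \<open>ln n \<le> \<tau>(n) ln 4\<close>.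

  Fix \<open>Y\<close>. Apart from the numbers below \<open>\<surd>x\<close>, the \<open>O(x / ln x)\<close> primes and the at most
  \<open>3x / Y\<close> numbers divisible by \<open>k\<^sup>2\<close> with \<open>k > Y\<close> or by \<open>k ^ (Y + 1)\<close>, every \<open>s\<close>-practical
  \<open>n \<le> x\<close> is composite and has \<open>\<tau>(n) \<le> 2 ^ \<omega>(n) (Y + 1) ^ Y\<close>, so \<open>2 ^ \<omega>(n) \<gg>\<^sub>Y ln x\<close>. By Mertens'
  estimate \<open>\<Sum>\<^sub>n\<^sub>\<le>\<^sub>x \<surd>2 ^ \<omega>(n) \<le> x exp ((\<surd>2 - 1) \<Sum>\<^sub>p\<^sub>\<le>\<^sub>x 1/p) \<ll> x (ln x) ^ (\<surd>2 - 1)\<close>,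
  so there are only \<open>O\<^sub>Y(x (ln x) ^ (\<surd>2 - 3/2)) = o(x)\<close> of them. Letting \<open>Y \<rightarrow> \<infinity>\<close> gives
  density \<open>0\<close>.\<close>

section \<open>Chebyshev's and Mertens' estimates\<close>

definition primes_upto :: "nat \<Rightarrow> nat set" where
  "primes_upto n = {p. prime p \<and> p \<le> n}"

lemma finite_primes_upto [simp]: "finite (primes_upto n)"
  unfolding primes_upto_def by simp

lemma primes_upto_Suc:
  "primes_upto (Suc n) = (if prime (Suc n) then insert (Suc n) (primes_upto n) else primes_upto n)"
  unfolding primes_upto_def by (auto simp: le_Suc_eq)

lemma sum_primes_upto_Suc:
  "(\<Sum>p\<in>primes_upto (Suc n). f p) = (\<Sum>p\<in>primes_upto n. f p) + (if prime (Suc n) then f (Suc n) else 0)"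
proof (cases "prime (Suc n)")
  case True
  moreover have "Suc n \<notin> primes_upto n"
    by (simp add: primes_upto_def)
  ultimately show ?thesis
    by (simp add: primes_upto_Suc add.commute)
qed (simp add: primes_upto_Suc)

lemma primes_upto_2: "primes_upto 2 = {2}"
  by (auto simp: primes_upto_def dest: prime_ge_2_nat)

lemma primes_upto_eq_empty: "n \<le> 1 \<Longrightarrow> primes_upto n = {}"
  by (auto simp: primes_upto_def dest: prime_ge_2_nat)

lemma prime_factors_subset_primes_upto:
  assumes "k \<in> {1..n}"
  shows "prime_factors k \<subseteq> primes_upto n"
proof
  fix p assume "p \<in> prime_factors k"
  then have "prime p" "p dvd k"
    by (auto simp: in_prime_factors_iff)
  moreover have "p \<le> k"
    using \<open>p dvd k\<close> assms by (intro dvd_imp_le) auto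
  ultimately show "p \<in> primes_upto n"
    using assms by (simp add: primes_upto_def)
qed

lemma card_multiples_atLeastAtMost:
  assumes "d > 0"
  shows "card {k\<in>{1..n}. d dvd k} = n div d"
proof -
  have "{k\<in>{1..n}. d dvd k} = (\<lambda>j. d * j) ` {1..n div d}"
  proof (intro set_eqI iffI)
    fix k assume "k \<in> {k\<in>{1..n}. d dvd k}"
    then obtain j where "k = d * j" "1 \<le> k" "k \<le> n" by auto
    then show "k \<in> (\<lambda>j. d * j) ` {1..n div d}"
      using assms by (auto simp: less_eq_div_iff_mult_less_eq mult.commute)
  next
    fix k assume "k \<in> (\<lambda>j. d * j) ` {1..n div d}"
    then show "k \<in> {k\<in>{1..n}. d dvd k}"
      using assms by (auto simp: less_eq_div_iff_mult_less_eq mult.commute)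
  qed
  moreover have "inj_on (\<lambda>j. d * j) {1..n div d}"
    using assms by (auto simp: inj_on_def)
  ultimately show ?thesis
    by (simp add: card_image)
qed

lemma real_card_multiples_le:
  assumes "d > 0"
  shows "real (card {k\<in>{1..n}. d dvd k}) \<le> real n / real d"
proof -
  have "of_int \<lfloor>real n / real d\<rfloor> \<le> real n / real d"
    by (rule of_int_floor_le)
  then show ?thesis
    unfolding card_multiples_atLeastAtMost[OF assms] floor_divide_of_nat_eq by simp
qed

lemma real_card_multiples_ge:
  assumes "d > 0"
  shows "real n / real d - 1 \<le> real (card {k\<in>{1..n}. d dvd k})"
proof -
  have "real n / real d - 1 \<le> of_int \<lfloor>real n / real d\<rfloor>"
    by (rule real_of_int_floor_ge_diff_one)
  then show ?thesis
    unfolding card_multiples_atLeastAtMost[OF assms] floor_divide_of_nat_eq by simp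
qed

lemma real_card_UN_multiples_le:
  assumes "finite K" "\<forall>k\<in>K. f k > 0"
  shows "real (card (\<Union>k\<in>K. {n\<in>{1..x}. f k dvd n})) \<le> real x * (\<Sum>k\<in>K. 1 / real (f k))"
proof -
  have "card (\<Union>k\<in>K. {n\<in>{1..x}. f k dvd n}) \<le> (\<Sum>k\<in>K. card {n\<in>{1..x}. f k dvd n})"
    by (rule card_UN_le[OF assms(1)])
  then have "real (card (\<Union>k\<in>K. {n\<in>{1..x}. f k dvd n})) \<le> (\<Sum>k\<in>K. real (card {n\<in>{1..x}. f k dvd n}))"
    by (simp only: of_nat_sum[symmetric] of_nat_le_iff)
  also have "\<dots> \<le> (\<Sum>k\<in>K. real x / real (f k))"
    using assms(2) by (intro sum_mono real_card_multiples_le) auto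
  finally show ?thesis
    by (simp add: sum_distrib_left)
qed

lemma prod_dvd_of_subset_prime_factors:
  fixes n :: nat
  assumes "X \<subseteq> prime_factors n"
  shows "\<Prod>X dvd n"
proof (cases "n = 0")
  case False
  have "\<Prod>X dvd \<Prod>(prime_factors n)"
    using assms by (intro prod_dvd_prod_subset) auto
  also have "\<dots> dvd (\<Prod>p\<in>prime_factors n. p ^ multiplicity p n)"
    by (intro prod_dvd_prod dvd_power) (auto simp: prime_factors_multiplicity)
  also have "\<dots> = n"
    using False by (simp add: prime_factorization_nat[symmetric])
  finally show ?thesis .
qed simp

lemma prime_dvd_central_binomial:
  assumes "prime p" "m + 1 < p" "p \<le> 2 * m + 1"
  shows "p dvd (2 * m + 1) choose m"
proof -
  have "2 * m + 1 - m = m + 1"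
    by simp
  then have "fact m * fact (m + 1) * ((2 * m + 1) choose m) = (fact (2 * m + 1) :: nat)"
    using binomial_fact_lemma[of m "2 * m + 1"] by (simp only:)
  moreover have "p dvd (fact (2 * m + 1) :: nat)"
    using assms(3) prime_dvd_fact_iff[OF assms(1)] by blast
  moreover have "\<not> p dvd (fact m * fact (m + 1) :: nat)"
    using assms(2) prime_dvd_fact_iff[OF assms(1)] prime_dvd_mult_iff[OF assms(1)]
    by (auto simp del: fact_Suc)
  ultimately show ?thesis
    using prime_dvd_mult_iff[OF assms(1)] by metis
qed

lemma central_binomial_le: "(2 * m + 1) choose m \<le> 4 ^ m"
proof -
  have "2 * ((2 * m + 1) choose m) = (\<Sum>k\<in>{m, m + 1}. (2 * m + 1) choose k)"
    using binomial_symmetric[of m "2 * m + 1"] by simp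
  also have "\<dots> \<le> (\<Sum>k\<le>2 * m + 1. (2 * m + 1) choose k)"
    by (intro sum_mono2) auto
  also have "\<dots> = 2 ^ (2 * m + 1)"
    by (rule choose_row_sum)
  also have "\<dots> = 2 * 4 ^ m"
    by (simp add: power_mult)
  finally show ?thesis by simp
qed

text \<open>Chebyshev's bound, by Erdos' argument: the primes in \<open>]m + 1, 2m + 1]\<close> all
  divide the central binomial coefficient \<open>(2m+1) choose m \<le> 4\<^sup>m\<close>.\<close>
lemma prod_primes_upto_le: "\<Prod>(primes_upto n) \<le> 4 ^ n"
proof (induction n rule: less_induct)
  case (less n)
  have "n \<le> 1 \<or> n = 2 \<or> (n > 2 \<and> even n) \<or> (\<exists>m. n = 2 * m + 1 \<and> m \<ge> 1)"
    by presburger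
  then consider (small) "n \<le> 1" | (two) "n = 2" | (even) "n > 2" "even n"
    | (odd) m where "n = 2 * m + 1" "m \<ge> 1"
    by blast
  then show ?case
  proof cases
    case small
    then show ?thesis
      by (simp add: primes_upto_eq_empty)
  next
    case two
    then show ?thesis
      by (simp add: primes_upto_2)
  next
    case even
    then have "\<not> prime n"
      using prime_odd_nat by blast
    then have "primes_upto n = primes_upto (n - 1)"
      by (auto simp: primes_upto_def le_less)
    with less even have "\<Prod>(primes_upto n) \<le> 4 ^ (n - 1)"
      by simp
    also have "\<dots> \<le> 4 ^ n"
      by simp
    finally show ?thesis .
  next
    case odd
    define Q where "Q = {p\<in>primes_upto n. m + 1 < p}"
    have split: "primes_upto n = primes_upto (m + 1) \<union> Q"
      using odd by (auto simp: Q_def primes_upto_def)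
    have "Q \<subseteq> prime_factors ((2 * m + 1) choose m)"
    proof
      fix p assume "p \<in> Q"
      then have "prime p" "m + 1 < p" "p \<le> 2 * m + 1"
        using odd by (auto simp: Q_def primes_upto_def)
      then show "p \<in> prime_factors ((2 * m + 1) choose m)"
        using prime_dvd_central_binomial by (simp add: in_prime_factors_iff)
    qed
    then have "\<Prod>Q \<le> (2 * m + 1) choose m"
      by (intro dvd_imp_le prod_dvd_of_subset_prime_factors) auto
    also have "\<dots> \<le> 4 ^ m"
      by (rule central_binomial_le)
    finally have "\<Prod>Q \<le> 4 ^ m" .
    moreover have "\<Prod>(primes_upto (m + 1)) \<le> 4 ^ (m + 1)"
      using odd by (intro less) simp
    moreover have "\<Prod>(primes_upto n) = \<Prod>(primes_upto (m + 1)) * \<Prod>Q"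
      unfolding split by (rule prod.union_disjoint) (auto simp: Q_def primes_upto_def)
    moreover have "(4::nat) ^ (m + 1) * 4 ^ m = 4 ^ n"
      using odd by (simp flip: power_add)
    ultimately show ?thesis
      by (metis mult_le_mono)
  qed
qed

lemma sum_ln_primes_le_ln:
  assumes "finite A" "\<forall>p\<in>A. prime p" "\<Prod>A \<le> m"
  shows "(\<Sum>p\<in>A. ln (real p)) \<le> ln (real m)"
proof -
  have pos: "0 < \<Prod>A"
    using assms by (intro prod_pos) (auto simp: prime_gt_0_nat)
  have "(\<Sum>p\<in>A. ln (real p)) = ln (\<Prod>p\<in>A. real p)"
    using assms by (subst ln_prod) (auto simp: prime_gt_0_nat)
  also have "\<dots> = ln (real (\<Prod>A))"
    by simp
  also have "\<dots> \<le> ln (real m)"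
    using pos assms(3) by (intro ln_mono) (simp_all only: of_nat_le_iff of_nat_0_less_iff)
  finally show ?thesis .
qed

lemma sum_ln_primes_upto_le: "(\<Sum>p\<in>primes_upto n. ln (real p)) \<le> real n * ln 4"
proof -
  have "(\<Sum>p\<in>primes_upto n. ln (real p)) \<le> ln (real (4 ^ n))"
    by (intro sum_ln_primes_le_ln prod_primes_upto_le) (simp_all add: primes_upto_def)
  then show ?thesis
    by (simp add: ln_realpow)
qed

lemma sum_ln_prime_factors_le:
  assumes "k > 0"
  shows "(\<Sum>p\<in>prime_factors k. ln (real p)) \<le> ln (real k)"
proof (rule sum_ln_primes_le_ln)
  show "\<Prod>(prime_factors k) \<le> k"
    using assms by (intro dvd_imp_le prod_dvd_of_subset_prime_factors) auto
qed (simp_all add: in_prime_factors_iff)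

lemma sum_ln_div_primes_upto_le:
  assumes "n \<ge> 1"
  shows "(\<Sum>p\<in>primes_upto n. ln (real p) / real p) \<le> ln (real n) + ln 4"
proof -
  let ?P = "primes_upto n"
  have pf: "prime_factors k = {p\<in>?P. p dvd k}" if "k \<in> {1..n}" for k
    using prime_factors_subset_primes_upto[OF that] that
    by (auto simp: in_prime_factors_iff primes_upto_def)
  have "(\<Sum>p\<in>?P. ln (real p) * (real n / real p - 1))
      \<le> (\<Sum>p\<in>?P. ln (real p) * real (card {k\<in>{1..n}. p dvd k}))"
    by (intro sum_mono mult_left_mono real_card_multiples_ge)
      (auto simp: primes_upto_def prime_gt_0_nat prime_ge_Suc_0_nat)
  also have "\<dots> = (\<Sum>p\<in>?P. \<Sum>k\<in>{k\<in>{1..n}. p dvd k}. ln (real p))"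
    by (simp add: mult.commute)
  also have "\<dots> = (\<Sum>k\<in>{1..n}. \<Sum>p\<in>{p\<in>?P. p dvd k}. ln (real p))"
    by (rule sum.swap_restrict[symmetric]) auto
  also have "\<dots> = (\<Sum>k\<in>{1..n}. \<Sum>p\<in>prime_factors k. ln (real p))"
    by (simp add: pf)
  also have "\<dots> \<le> (\<Sum>k\<in>{1..n}. ln (real n))"
    by (intro sum_mono order.trans[OF sum_ln_prime_factors_le]) auto
  finally have "real n * (\<Sum>p\<in>?P. ln (real p) / real p) - (\<Sum>p\<in>?P. ln (real p)) \<le> real n * ln (real n)"
    by (simp add: sum_distrib_left sum_subtractf algebra_simps)
  with sum_ln_primes_upto_le[of n]
  have "real n * (\<Sum>p\<in>?P. ln (real p) / real p) \<le> real n * (ln (real n) + ln 4)"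
    by (simp add: distrib_left)
  then show ?thesis
    using assms by (simp add: mult_le_cancel_left_pos)
qed

text \<open>Abel summation of \<open>ln p / p\<close> against \<open>1 / ln\<close>, done as an induction on \<open>N\<close>; the
  Mertens-type bound controls the increment from \<open>ln N\<close> to \<open>ln (N + 1)\<close>.\<close>
lemma sum_inverse_primes_upto_partial_summation:
  assumes "N \<ge> 2"
  shows "(\<Sum>p\<in>primes_upto N. 1 / real p) - (\<Sum>p\<in>primes_upto N. ln (real p) / real p) / ln (real N)
    \<le> ln (ln (real N)) - ln (ln 2) + ln 4 * (1 / ln 2 - 1 / ln (real N))"
  using assms
proof (induction N rule: dec_induct)
  case base
  then show ?case
    by (simp add: primes_upto_2)
next
  case (step N)
  let ?R = "\<lambda>N. \<Sum>p\<in>primes_upto N. 1 / real p"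
  let ?A = "\<lambda>N. \<Sum>p\<in>primes_upto N. ln (real p) / real p"
  define d where "d = 1 / ln (real N) - 1 / ln (real (Suc N))"
  have ln_pos: "0 < ln (real N)" and ln_less: "ln (real N) < ln (real (Suc N))"
    using step by auto
  have "?R (Suc N) - ?A (Suc N) / ln (real (Suc N)) = ?R N - ?A N / ln (real (Suc N))"
    using ln_pos ln_less by (simp add: sum_primes_upto_Suc add_divide_distrib)
  also have "\<dots> = (?R N - ?A N / ln (real N)) + ?A N * d"
    unfolding d_def by (simp add: algebra_simps)
  finally have increment: "?R (Suc N) - ?A (Suc N) / ln (real (Suc N)) = (?R N - ?A N / ln (real N)) + ?A N * d" .
  have "?A N * d \<le> (ln (real N) + ln 4) * d"
    using sum_ln_div_primes_upto_le[of N] step ln_pos ln_less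
    by (intro mult_right_mono) (auto simp: d_def frac_le)
  moreover have "ln (real N) * d \<le> ln (ln (real (Suc N))) - ln (ln (real N))"
  proof -
    have "ln (ln (real N) / ln (real (Suc N))) \<le> ln (real N) / ln (real (Suc N)) - 1"
      using ln_pos ln_less by (intro ln_le_minus_one divide_pos_pos) linarith+
    moreover have "ln (ln (real N) / ln (real (Suc N))) = ln (ln (real N)) - ln (ln (real (Suc N)))"
      using ln_pos ln_less by (intro ln_divide_pos) linarith+
    moreover have "ln (real N) * d = 1 - ln (real N) / ln (real (Suc N))"
      using ln_pos ln_less by (simp add: d_def field_simps)
    ultimately show ?thesis
      by linarith
  qed
  moreover have "ln 4 * (1 / ln 2 - 1 / ln (real N)) + ln 4 * d = ln 4 * (1 / ln 2 - 1 / ln (real (Suc N)))"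
    by (simp add: d_def algebra_simps)
  ultimately show ?case
    using step.IH increment by (simp add: distrib_right)
qed

lemma sum_inverse_primes_upto_le:
  assumes "N \<ge> 2"
  shows "(\<Sum>p\<in>primes_upto N. 1 / real p) \<le> ln (ln (real N)) + 3 - ln (ln 2)"
proof -
  have ln_pos: "ln (real N) > 0"
    using assms by simp
  have "(\<Sum>p\<in>primes_upto N. ln (real p) / real p) / ln (real N) \<le> 1 + ln 4 / ln (real N)"
    using sum_ln_div_primes_upto_le[of N] assms ln_pos by (simp add: divide_le_eq algebra_simps)
  moreover have "ln 4 * (1 / ln 2 - 1 / ln (real N)) = 2 - ln 4 / ln (real N)"
    using ln_realpow[of 2 2] by (simp add: right_diff_distrib)
  ultimately show ?thesis
    using sum_inverse_primes_upto_partial_summation[OF assms] by linarith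
qed

section \<open>Moments of the number of prime factors\<close>

lemma sum_power_card_prime_factors_le:
  fixes \<mu> :: real
  assumes "\<mu> \<ge> 0"
  shows "(\<Sum>n\<in>{1..x}. (1 + \<mu>) ^ card (prime_factors n))
    \<le> real x * exp (\<mu> * (\<Sum>p\<in>primes_upto x. 1 / real p))"
proof -
  let ?P = "primes_upto x"
  have expand: "(1 + \<mu>) ^ card A = (\<Sum>X\<in>Pow A. \<Prod>p\<in>X. \<mu>)" if "finite A" for A :: "nat set"
    using prod_add[OF that, of "\<lambda>_. \<mu>" "\<lambda>_. 1"] by (simp add: add.commute)
  have count: "real (card {n\<in>{1..x}. X \<subseteq> prime_factors n}) \<le> real x / real (\<Prod>X)"
    if "X \<subseteq> ?P" for X
  proof -
    have "finite X" "\<forall>p\<in>X. prime p"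
      using that finite_subset[OF that] by (auto simp: primes_upto_def)
    then have "{n\<in>{1..x}. X \<subseteq> prime_factors n} \<subseteq> {n\<in>{1..x}. \<Prod>X dvd n}"
      using prod_dvd_of_subset_prime_factors by auto
    then have "card {n\<in>{1..x}. X \<subseteq> prime_factors n} \<le> card {n\<in>{1..x}. \<Prod>X dvd n}"
      by (intro card_mono) auto
    also have "real \<dots> \<le> real x / real (\<Prod>X)"
      using \<open>\<forall>p\<in>X. prime p\<close> by (intro real_card_multiples_le prod_pos) (auto simp: prime_gt_0_nat)
    finally show ?thesis
      by simp
  qed
  have "(\<Sum>n\<in>{1..x}. (1 + \<mu>) ^ card (prime_factors n))
      = (\<Sum>n\<in>{1..x}. \<Sum>X\<in>{X\<in>Pow ?P. X \<subseteq> prime_factors n}. \<Prod>p\<in>X. \<mu>)"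
  proof (intro sum.cong refl)
    fix n assume "n \<in> {1..x}"
    then have "{X\<in>Pow ?P. X \<subseteq> prime_factors n} = Pow (prime_factors n)"
      using prime_factors_subset_primes_upto by blast
    then show "(1 + \<mu>) ^ card (prime_factors n) = (\<Sum>X\<in>{X\<in>Pow ?P. X \<subseteq> prime_factors n}. \<Prod>p\<in>X. \<mu>)"
      by (simp add: expand)
  qed
  also have "\<dots> = (\<Sum>X\<in>Pow ?P. \<Sum>n\<in>{n\<in>{1..x}. X \<subseteq> prime_factors n}. \<Prod>p\<in>X. \<mu>)"
    by (rule sum.swap_restrict) auto
  also have "\<dots> \<le> (\<Sum>X\<in>Pow ?P. real x / real (\<Prod>X) * (\<Prod>p\<in>X. \<mu>))"
  proof (rule sum_mono)
    fix X assume "X \<in> Pow ?P"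
    then have "real (card {n\<in>{1..x}. X \<subseteq> prime_factors n}) * (\<Prod>p\<in>X. \<mu>)
        \<le> real x / real (\<Prod>X) * (\<Prod>p\<in>X. \<mu>)"
      using assms count by (intro mult_right_mono prod_nonneg) auto
    then show "(\<Sum>n\<in>{n\<in>{1..x}. X \<subseteq> prime_factors n}. \<Prod>p\<in>X. \<mu>)
        \<le> real x / real (\<Prod>X) * (\<Prod>p\<in>X. \<mu>)"
      by (simp only: sum_constant)
  qed
  also have "\<dots> = real x * (\<Sum>X\<in>Pow ?P. \<Prod>p\<in>X. \<mu> / real p)"
    by (simp add: sum_distrib_left prod_dividef)
  also have "\<dots> = real x * (\<Prod>p\<in>?P. 1 + \<mu> / real p)"
    using prod_add[of ?P "\<lambda>p. \<mu> / real p" "\<lambda>_. 1"] by (simp add: add.commute)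
  also have "\<dots> \<le> real x * (\<Prod>p\<in>?P. exp (\<mu> / real p))"
    using assms by (intro mult_left_mono prod_mono) (auto simp: add.commute)
  also have "\<dots> = real x * exp (\<mu> * (\<Sum>p\<in>?P. 1 / real p))"
    by (simp add: exp_sum sum_distrib_left)
  finally show ?thesis .
qed

section \<open>Divisors of \<open>s\<close>-practical numbers\<close>

lemma finite_divisors_set: "n > 0 \<Longrightarrow> finite (divisors_set n)"
  unfolding divisors_set_def by (rule finite_subset[of _ "{..n}"]) (auto dest: dvd_imp_le)

lemma S_s_le_if_s_practical:
  assumes "s_practical n"
  shows "S_s n \<le> 2 ^ card (divisors_set n)"
proof -
  have fin: "finite (divisors_set n)"
    using assms by (simp add: s_practical_def finite_divisors_set)
  have "{1..S_s n} \<subseteq> (\<lambda>D. \<Sum>d\<in>D. s_fn d) ` Pow (divisors_set n)"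
  proof
    fix m assume "m \<in> {1..S_s n}"
    then have "0 < m \<and> m \<le> S_s n"
      by simp
    then obtain D where "D \<subseteq> divisors_set n" "m = (\<Sum>d\<in>D. s_fn d)"
      using assms unfolding s_practical_def by blast
    then show "m \<in> (\<lambda>D. \<Sum>d\<in>D. s_fn d) ` Pow (divisors_set n)"
      by blast
  qed
  then have "card {1..S_s n} \<le> card ((\<lambda>D. \<Sum>d\<in>D. s_fn d) ` Pow (divisors_set n))"
    using fin by (intro card_mono) auto
  also have "\<dots> \<le> card (Pow (divisors_set n))"
    by (rule card_image_le) (simp add: fin)
  finally show ?thesis
    using fin by (simp add: card_Pow)
qed

lemma proper_divisor_le_s_fn:
  assumes "d dvd n" "d \<noteq> n" "n > 0"
  shows "d \<le> s_fn n"
proof -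
  have "d > 0"
    using assms by (auto intro: Nat.gr0I)
  then have "{d, n} \<subseteq> divisors_set n"
    using assms by (auto simp: divisors_set_def)
  then have "(\<Sum>e\<in>{d, n}. e) \<le> sigma_fn n"
    unfolding sigma_fn_def using assms by (intro sum_mono2 finite_divisors_set) auto
  then show ?thesis
    using assms by (simp add: s_fn_def)
qed

lemma le_S_s_squared_if_composite:
  assumes "n \<ge> 2" "\<not> prime n"
  shows "n \<le> S_s n ^ 2"
proof -
  obtain d where d: "d dvd n" "d \<noteq> 1" "d \<noteq> n"
    using assms by (auto simp: prime_nat_iff)
  define e where "e = n div d"
  have n: "n = d * e"
    using d by (simp add: e_def)
  have "e dvd n" "e \<noteq> n"
    using n d assms by auto
  then have "d \<le> s_fn n" "e \<le> s_fn n"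
    using d assms by (auto intro!: proper_divisor_le_s_fn)
  then have "n \<le> s_fn n ^ 2"
    unfolding n power2_eq_square by (rule mult_le_mono)
  also have "s_fn n \<le> S_s n"
    using assms finite_divisors_set[of n]
    by (auto simp: S_s_def divisors_set_def intro!: member_le_sum)
  finally show ?thesis
    by (simp add: power_mono)
qed

lemma card_divisors_set_le:
  assumes "n > 0"
  shows "card (divisors_set n) \<le> (\<Prod>p\<in>prime_factors n. multiplicity p n + 1)"
proof -
  let ?E = "PiE (prime_factors n) (\<lambda>p. {0..multiplicity p n})"
  have "divisors_set n \<subseteq> (\<lambda>f. \<Prod>p\<in>prime_factors n. p ^ f p) ` ?E"
  proof
    fix d assume "d \<in> divisors_set n"
    then have d: "d dvd n" "d > 0"
      by (auto simp: divisors_set_def)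
    have sub: "prime_factors d \<subseteq> prime_factors n"
      using d assms by (auto simp: in_prime_factors_iff intro: dvd_trans)
    have "d = (\<Prod>p\<in>prime_factors d. p ^ multiplicity p d)"
      using d by (simp add: prime_factorization_nat[symmetric])
    also have "\<dots> = (\<Prod>p\<in>prime_factors n. p ^ multiplicity p d)"
      using sub by (intro prod.mono_neutral_left) (auto simp: not_dvd_imp_multiplicity_0 in_prime_factors_iff d)
    finally have "d = (\<Prod>p\<in>prime_factors n. p ^ restrict (\<lambda>p. multiplicity p d) (prime_factors n) p)"
      by simp
    moreover have "restrict (\<lambda>p. multiplicity p d) (prime_factors n) \<in> ?E"
      using d assms by (auto intro: dvd_imp_multiplicity_le)
    ultimately show "d \<in> (\<lambda>f. \<Prod>p\<in>prime_factors n. p ^ f p) ` ?E"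
      by blast
  qed
  then have "card (divisors_set n) \<le> card ((\<lambda>f. \<Prod>p\<in>prime_factors n. p ^ f p) ` ?E)"
    by (intro card_mono finite_imageI finite_PiE) auto
  also have "\<dots> \<le> card ?E"
    by (rule card_image_le) (auto intro: finite_PiE)
  also have "\<dots> = (\<Prod>p\<in>prime_factors n. multiplicity p n + 1)"
    by (simp add: card_PiE)
  finally show ?thesis .
qed

section \<open>Numbers with bounded prime powers\<close>

definition tame :: "nat \<Rightarrow> nat \<Rightarrow> bool" where
  "tame Y n \<longleftrightarrow> (\<forall>p. prime p \<longrightarrow> p dvd n \<longrightarrow> (p ^ 2 dvd n \<longrightarrow> p \<le> Y) \<and> \<not> p ^ (Y + 1) dvd n)"

lemma card_divisors_set_le_if_tame:
  assumes "n > 0" "tame Y n"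
  shows "card (divisors_set n) \<le> 2 ^ card (prime_factors n) * (Y + 1) ^ Y"
proof -
  have mult: "multiplicity p n + 1 \<le> 2 * (if p \<le> Y then Y + 1 else 1)" if "p \<in> prime_factors n" for p
  proof -
    have p: "prime p" "p dvd n" "\<not> is_unit p"
      using that by (auto simp: in_prime_factors_iff)
    have "\<not> p ^ (Y + 1) dvd n"
      using assms(2) p by (auto simp: tame_def)
    then have "multiplicity p n \<le> Y"
      using power_dvd_iff_le_multiplicity[of n p "Y + 1"] assms(1) p by simp
    moreover have "multiplicity p n < 2" if "\<not> p \<le> Y"
    proof -
      have "\<not> p ^ 2 dvd n"
        using assms(2) p that by (auto simp: tame_def)
      then show ?thesis
        using power_dvd_iff_le_multiplicity[of n p 2] assms(1) p by simp
    qed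
    ultimately show ?thesis
      by auto
  qed
  have "card (divisors_set n) \<le> (\<Prod>p\<in>prime_factors n. multiplicity p n + 1)"
    by (rule card_divisors_set_le[OF assms(1)])
  also have "\<dots> \<le> (\<Prod>p\<in>prime_factors n. 2 * (if p \<le> Y then Y + 1 else 1))"
    by (intro prod_mono conjI mult) simp_all
  also have "\<dots> = 2 ^ card (prime_factors n) * (Y + 1) ^ card {p\<in>prime_factors n. p \<le> Y}"
    by (simp add: prod.distrib prod.If_cases Int_def)
  also have "\<dots> \<le> 2 ^ card (prime_factors n) * (Y + 1) ^ Y"
  proof -
    have "{p\<in>prime_factors n. p \<le> Y} \<subseteq> {1..Y}"
      by (auto simp: in_prime_factors_iff prime_ge_Suc_0_nat)
    then have "card {p\<in>prime_factors n. p \<le> Y} \<le> Y"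
      using card_mono[of "{1..Y}"] by fastforce
    then show ?thesis
      by (intro mult_left_mono power_increasing) auto
  qed
  finally show ?thesis .
qed

lemma sum_inverse_squares_le:
  assumes "Y \<ge> 1"
  shows "(\<Sum>k\<in>{Y+1..x}. 1 / real k ^ 2) \<le> 1 / real Y"
proof -
  have telescope: "(\<Sum>k\<in>{Y+1..Y+m}. 1 / real k ^ 2) \<le> 1 / real Y - 1 / real (Y + m)" for m
  proof (induction m)
    case (Suc m)
    define a where "a = real (Y + m)"
    have "a \<ge> 1"
      using assms by (simp add: a_def)
    then have "1 / (a + 1) ^ 2 \<le> 1 / (a * (a + 1))"
      by (intro divide_left_mono) (auto simp: power2_eq_square)
    also have "\<dots> = 1 / a - 1 / (a + 1)"
      using \<open>a \<ge> 1\<close> by (simp add: field_simps)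
    finally have "1 / real (Y + Suc m) ^ 2 \<le> 1 / real (Y + m) - 1 / real (Y + Suc m)"
      by (simp add: a_def add_ac)
    with Suc show ?case
      by simp
  qed simp
  have "(\<Sum>k\<in>{Y+1..x}. 1 / real k ^ 2) \<le> (\<Sum>k\<in>{Y+1..Y+x}. 1 / real k ^ 2)"
    by (intro sum_mono2) auto
  also have "\<dots> \<le> 1 / real Y - 1 / real (Y + x)"
    by (rule telescope)
  also have "\<dots> \<le> 1 / real Y"
    by simp
  finally show ?thesis .
qed

lemma sum_inverse_powers_le:
  assumes "Y \<ge> 1"
  shows "(\<Sum>k\<in>{2..x}. 1 / real (k ^ (Y + 1))) \<le> 2 / real Y"
proof -
  have "(\<Sum>k\<in>{2..x}. 1 / real (k ^ (Y + 1))) \<le> (\<Sum>k\<in>{2..x}. 1 / 2 ^ (Y - 1) * (1 / real k ^ 2))"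
  proof (intro sum_mono)
    fix k assume k: "k \<in> {2..x}"
    then have "2 ^ (Y - 1) * real k ^ 2 \<le> real k ^ (Y - 1) * real k ^ 2"
      by (intro mult_right_mono power_mono) auto
    also have "\<dots> = real (k ^ (Y + 1))"
      using assms by (simp flip: power_add)
    finally show "1 / real (k ^ (Y + 1)) \<le> 1 / 2 ^ (Y - 1) * (1 / real k ^ 2)"
      using k by (simp add: frac_le)
  qed
  also have "\<dots> = 1 / 2 ^ (Y - 1) * (\<Sum>k\<in>{2..x}. 1 / real k ^ 2)"
    by (rule sum_distrib_left[symmetric])
  also have "\<dots> \<le> 1 / 2 ^ (Y - 1)"
    using sum_inverse_squares_le[of 1 x] by (intro mult_left_le) (simp_all add: numeral_2_eq_2)
  also have "\<dots> \<le> 2 / real Y"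
  proof -
    have "Y < 2 ^ Y"
      by (rule less_exp)
    also have "(2::nat) ^ Y = 2 * 2 ^ (Y - 1)"
      using assms by (cases Y) auto
    finally have "real Y \<le> real (2 * 2 ^ (Y - 1))"
      by (simp only: of_nat_le_iff less_imp_le)
    then show ?thesis
      using assms by (simp add: field_simps)
  qed
  finally show ?thesis .
qed

lemma card_not_tame_le:
  assumes "Y \<ge> 1"
  shows "real (card {n\<in>{1..x}. \<not> tame Y n}) \<le> 3 * real x / real Y"
proof -
  let ?A = "\<Union>k\<in>{Y+1..x}. {n\<in>{1..x}. k ^ 2 dvd n}"
  let ?B = "\<Union>k\<in>{2..x}. {n\<in>{1..x}. k ^ (Y + 1) dvd n}"
  have "{n\<in>{1..x}. \<not> tame Y n} \<subseteq> ?A \<union> ?B"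
  proof
    fix n assume n: "n \<in> {n\<in>{1..x}. \<not> tame Y n}"
    then obtain p where p: "prime p" "p dvd n" "(p ^ 2 dvd n \<and> \<not> p \<le> Y) \<or> p ^ (Y + 1) dvd n"
      by (auto simp: tame_def)
    moreover have "p \<le> x"
      using p n dvd_imp_le[of p n] by auto
    ultimately show "n \<in> ?A \<union> ?B"
      using n prime_ge_2_nat[of p] by auto
  qed
  then have "card {n\<in>{1..x}. \<not> tame Y n} \<le> card (?A \<union> ?B)"
    by (intro card_mono) auto
  also have "\<dots> \<le> card ?A + card ?B"
    by (rule card_Un_le)
  finally have split: "real (card {n\<in>{1..x}. \<not> tame Y n}) \<le> real (card ?A) + real (card ?B)"
    by linarith
  have "real (card ?A) \<le> real x * (\<Sum>k\<in>{Y+1..x}. 1 / real (k ^ 2))"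
    by (rule real_card_UN_multiples_le) auto
  also have "\<dots> \<le> real x * (1 / real Y)"
    using sum_inverse_squares_le[OF assms] by (intro mult_left_mono) simp_all
  finally have A: "real (card ?A) \<le> real x / real Y"
    by simp
  have "real (card ?B) \<le> real x * (\<Sum>k\<in>{2..x}. 1 / real (k ^ (Y + 1)))"
    by (rule real_card_UN_multiples_le) auto
  also have "\<dots> \<le> real x * (2 / real Y)"
    using sum_inverse_powers_le[OF assms] by (intro mult_left_mono) simp_all
  finally have B: "real (card ?B) \<le> real x * (2 / real Y)" .
  have "3 * real x / real Y = real x / real Y + real x * (2 / real Y)"
    by (simp add: field_simps)
  with split A B show ?thesis
    by linarith
qed

lemma card_small_le: "real (card {n\<in>{1..x}. real n \<le> sqrt (real x)}) \<le> sqrt (real x)"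
proof -
  have "{n\<in>{1..x}. real n \<le> sqrt (real x)} \<subseteq> {1..nat \<lfloor>sqrt (real x)\<rfloor>}"
    by (auto simp: le_nat_floor)
  then have "card {n\<in>{1..x}. real n \<le> sqrt (real x)} \<le> nat \<lfloor>sqrt (real x)\<rfloor>"
    using card_mono[of "{1..nat \<lfloor>sqrt (real x)\<rfloor>}"] by fastforce
  then have "real (card {n\<in>{1..x}. real n \<le> sqrt (real x)}) \<le> real (nat \<lfloor>sqrt (real x)\<rfloor>)"
    by (simp only: of_nat_le_iff)
  also have "\<dots> = of_int \<lfloor>sqrt (real x)\<rfloor>"
    by simp
  also have "\<dots> \<le> sqrt (real x)"
    by (rule of_int_floor_le)
  finally show ?thesis .
qed

lemma one_less_ln_of_nat:
  assumes "x \<ge> 3"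
  shows "1 < ln (real x)"
proof -
  have "exp 1 < real x"
    using assms e_less_272 by linarith
  then have "ln (exp 1) < ln (real x)"
    using assms by (subst ln_less_cancel_iff) auto
  then show ?thesis
    by simp
qed

lemma ln_less_twice_ln_if_sqrt_less:
  fixes x y :: real
  assumes "x > 0" "sqrt x < y"
  shows "ln x < 2 * ln y"
proof -
  have "y > 0"
    using assms real_sqrt_gt_zero[of x] by linarith
  moreover have "x < y ^ 2"
    using assms real_le_rsqrt[of y x] by linarith
  ultimately have "ln x < ln (y ^ 2)"
    using assms by simp
  then show ?thesis
    using assms by (simp add: ln_realpow)
qed

lemma card_large_primes_le:
  assumes "x \<ge> 2"
  shows "real (card {n\<in>{1..x}. prime n \<and> sqrt (real x) < real n}) * (ln (real x) / 2) \<le> real x * ln 4"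
proof -
  let ?Q = "{n\<in>{1..x}. prime n \<and> sqrt (real x) < real n}"
  have "ln (real x) / 2 \<le> ln (real p)" if "p \<in> ?Q" for p
  proof -
    have "ln (real x) < 2 * ln (real p)"
      using that assms by (intro ln_less_twice_ln_if_sqrt_less) auto
    then show ?thesis
      by simp
  qed
  then have "real (card ?Q) * (ln (real x) / 2) \<le> (\<Sum>p\<in>?Q. ln (real p))"
    using sum_mono[of ?Q "\<lambda>_. ln (real x) / 2"] by simp
  also have "\<dots> \<le> (\<Sum>p\<in>primes_upto x. ln (real p))"
    by (intro sum_mono2) (auto simp: primes_upto_def prime_ge_Suc_0_nat)
  also have "\<dots> \<le> real x * ln 4"
    by (rule sum_ln_primes_upto_le)
  finally show ?thesis .
qed

lemma ln_le_if_tame_composite_s_practical: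
  assumes "s_practical n" "n \<ge> 2" "\<not> prime n" "tame Y n"
  shows "ln (real n) \<le> ln 4 * real ((Y + 1) ^ Y) * 2 ^ card (prime_factors n)"
proof -
  let ?\<tau> = "card (divisors_set n)"
  have "n \<le> S_s n ^ 2"
    using assms by (intro le_S_s_squared_if_composite)
  also have "\<dots> \<le> (2 ^ ?\<tau>) ^ 2"
    using assms by (intro power_mono S_s_le_if_s_practical) auto
  also have "\<dots> = 4 ^ ?\<tau>"
    by (simp add: power2_eq_square flip: power_mult_distrib)
  finally have "ln (real n) \<le> ln (4 ^ ?\<tau>)"
    using assms by (simp flip: of_nat_le_iff)
  also have "\<dots> = ln 4 * real ?\<tau>"
    by (simp add: ln_realpow)
  also have "real ?\<tau> \<le> real ((Y + 1) ^ Y) * 2 ^ card (prime_factors n)"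
  proof -
    have "?\<tau> \<le> (Y + 1) ^ Y * 2 ^ card (prime_factors n)"
      using card_divisors_set_le_if_tame[of n Y] assms by (simp add: mult.commute)
    then have "real ?\<tau> \<le> real ((Y + 1) ^ Y * 2 ^ card (prime_factors n))"
      by (simp only: of_nat_le_iff)
    then show ?thesis
      by (simp only: of_nat_mult of_nat_power of_nat_numeral)
  qed
  finally show ?thesis
    by (simp add: mult.assoc)
qed

lemma sqrt_ln_le_if_tame_composite_s_practical:
  assumes "x \<ge> 2" "sqrt (real x) < real n" "s_practical n" "\<not> prime n" "tame Y n"
  shows "sqrt (ln (real x) / (2 * ln 4 * real ((Y + 1) ^ Y))) \<le> sqrt 2 ^ card (prime_factors n)"
proof -
  have "1 < sqrt (real x)"
    using assms by simp
  then have "n \<ge> 2"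
    using assms by linarith
  have "ln (real x) < 2 * ln (real n)"
    using assms by (intro ln_less_twice_ln_if_sqrt_less) auto
  also have "\<dots> \<le> 2 * (ln 4 * real ((Y + 1) ^ Y) * 2 ^ card (prime_factors n))"
    using ln_le_if_tame_composite_s_practical[of n Y] assms \<open>n \<ge> 2\<close> by simp
  finally have "ln (real x) / (2 * ln 4 * real ((Y + 1) ^ Y)) \<le> 2 ^ card (prime_factors n)"
    by (simp add: divide_le_eq algebra_simps)
  then show ?thesis
    by (metis real_sqrt_le_iff real_sqrt_power)
qed

lemma card_tame_composite_s_practical_le:
  assumes "x \<ge> 2"
  shows "real (card {n\<in>{1..x}. sqrt (real x) < real n \<and> \<not> prime n \<and> tame Y n \<and> s_practical n})
      * sqrt (ln (real x) / (2 * ln 4 * real ((Y + 1) ^ Y)))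
    \<le> real x * exp ((sqrt 2 - 1) * (\<Sum>p\<in>primes_upto x. 1 / real p))"
proof -
  let ?M = "{n\<in>{1..x}. sqrt (real x) < real n \<and> \<not> prime n \<and> tame Y n \<and> s_practical n}"
  let ?L = "ln (real x) / (2 * ln 4 * real ((Y + 1) ^ Y))"
  have "real (card ?M) * sqrt ?L \<le> (\<Sum>n\<in>?M. sqrt 2 ^ card (prime_factors n))"
    using sum_mono[of ?M "\<lambda>_. sqrt ?L"] sqrt_ln_le_if_tame_composite_s_practical[OF assms]
    by (simp add: mult.commute)
  also have "\<dots> \<le> (\<Sum>n\<in>{1..x}. sqrt 2 ^ card (prime_factors n))"
    by (intro sum_mono2) auto
  also have "\<dots> \<le> real x * exp ((sqrt 2 - 1) * (\<Sum>p\<in>primes_upto x. 1 / real p))"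
    using sum_power_card_prime_factors_le[of "sqrt 2 - 1" x] by simp
  finally show ?thesis .
qed

text \<open>\<open>9/20\<close> is a rational upper bound for \<open>\<surd>2 - 1\<close> that stays below \<open>1/2\<close>.\<close>
lemma exp_sum_inverse_primes_upto_le:
  assumes "x \<ge> 3"
  shows "exp ((sqrt 2 - 1) * (\<Sum>p\<in>primes_upto x. 1 / real p))
    \<le> exp ((sqrt 2 - 1) * (3 - ln (ln 2))) * ln (real x) powr (9 / 20)"
proof -
  have ln_gt_1: "ln (real x) > 1"
    using assms by (rule one_less_ln_of_nat)
  have "sqrt 2 \<le> sqrt ((29 / 20) ^ 2 :: real)"
    by (simp add: power2_eq_square)
  then have mu: "0 \<le> sqrt 2 - 1" "sqrt 2 - 1 \<le> (9 / 20 :: real)"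
    by simp_all
  have "(sqrt 2 - 1) * (\<Sum>p\<in>primes_upto x. 1 / real p)
      \<le> (sqrt 2 - 1) * ln (ln (real x)) + (sqrt 2 - 1) * (3 - ln (ln 2))"
    using mult_left_mono[OF sum_inverse_primes_upto_le[of x] mu(1)] assms by (simp add: algebra_simps)
  also have "(sqrt 2 - 1) * ln (ln (real x)) \<le> 9 / 20 * ln (ln (real x))"
    using ln_gt_1 mu by (intro mult_right_mono) auto
  finally have "exp ((sqrt 2 - 1) * (\<Sum>p\<in>primes_upto x. 1 / real p))
      \<le> exp ((sqrt 2 - 1) * (3 - ln (ln 2)) + 9 / 20 * ln (ln (real x)))"
    by (simp add: add.commute)
  also have "\<dots> = exp ((sqrt 2 - 1) * (3 - ln (ln 2))) * ln (real x) powr (9 / 20)"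
    using ln_gt_1 by (simp add: exp_add powr_def)
  finally show ?thesis .
qed

lemma s_practical_density_le:
  assumes "Y \<ge> 1"
  shows "\<exists>c. \<forall>x\<ge>3. real (card {n\<in>{1..x}. s_practical n}) / real x
    \<le> 3 / real Y + sqrt (real x) / real x + 2 * ln 4 / ln (real x)
      + c * (ln (real x) powr (9 / 20) / sqrt (ln (real x)))"
proof (intro exI allI impI)
  define K where "K = 2 * ln 4 * real ((Y + 1) ^ Y)"
  define E where "E = exp ((sqrt 2 - 1) * (3 - ln (ln 2)))"
  fix x :: nat assume x: "x \<ge> 3"
  define Q where "Q = ln (real x) powr (9 / 20) / sqrt (ln (real x))"
  let ?Small = "{n\<in>{1..x}. real n \<le> sqrt (real x)}"
  let ?Prime = "{n\<in>{1..x}. prime n \<and> sqrt (real x) < real n}"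
  let ?Wild = "{n\<in>{1..x}. \<not> tame Y n}"
  let ?M = "{n\<in>{1..x}. sqrt (real x) < real n \<and> \<not> prime n \<and> tame Y n \<and> s_practical n}"
  have ln_x: "ln (real x) > 1"
    using x by (rule one_less_ln_of_nat)
  have "real (card ?Prime) \<le> 2 * ln 4 * real x / ln (real x)"
    using card_large_primes_le[of x] x ln_x by (simp add: field_simps)
  moreover have "real (card ?M) \<le> real x * (E * sqrt K * Q)"
  proof -
    have "real (card ?M) * sqrt (ln (real x) / K)
        \<le> real x * exp ((sqrt 2 - 1) * (\<Sum>p\<in>primes_upto x. 1 / real p))"
      unfolding K_def using x by (intro card_tame_composite_s_practical_le) simp
    also have "\<dots> \<le> real x * (E * ln (real x) powr (9 / 20))"
      unfolding E_def using x by (intro mult_left_mono exp_sum_inverse_primes_upto_le) simp_all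
    also have "\<dots> = real x * (E * sqrt K * Q) * sqrt (ln (real x) / K)"
      using ln_x by (simp add: Q_def K_def real_sqrt_divide)
    finally show ?thesis
      using ln_x by (simp add: K_def)
  qed
  moreover have "card {n\<in>{1..x}. s_practical n} \<le> card (?Small \<union> ?Prime \<union> ?Wild \<union> ?M)"
    by (intro card_mono) auto
  ultimately have "real (card {n\<in>{1..x}. s_practical n})
      \<le> sqrt (real x) + 2 * ln 4 * real x / ln (real x) + 3 * real x / real Y + real x * (E * sqrt K * Q)"
    using card_small_le[of x] card_not_tame_le[OF assms, of x]
      card_Un_le[of "?Small \<union> ?Prime \<union> ?Wild" ?M] card_Un_le[of "?Small \<union> ?Prime" ?Wild]
      card_Un_le[of ?Small ?Prime]
    by linarith
  also have "\<dots> = real x * (3 / real Y + sqrt (real x) / real x + 2 * ln 4 / ln (real x) + E * sqrt K * Q)"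
    using x by (simp add: field_simps)
  finally show "real (card {n\<in>{1..x}. s_practical n}) / real x
    \<le> 3 / real Y + sqrt (real x) / real x + 2 * ln 4 / ln (real x)
      + E * sqrt K * (ln (real x) powr (9 / 20) / sqrt (ln (real x)))"
    using x by (simp add: divide_le_eq mult.commute Q_def)
qed

lemma s_practical_density_eventually_less:
  assumes "Y \<ge> 1" "\<epsilon> > 0"
  shows "\<forall>\<^sub>F x in sequentially. real (card {n\<in>{1..x}. s_practical n}) / real x < 3 / real Y + \<epsilon>"
proof -
  obtain c where c: "\<forall>x\<ge>3. real (card {n\<in>{1..x}. s_practical n}) / real x
      \<le> 3 / real Y + sqrt (real x) / real x + 2 * ln 4 / ln (real x)
        + c * (ln (real x) powr (9 / 20) / sqrt (ln (real x)))"
    using s_practical_density_le[OF assms(1)] by blast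
  have "(\<lambda>x::nat. sqrt (real x) / real x + 2 * ln 4 / ln (real x)
      + c * (ln (real x) powr (9 / 20) / sqrt (ln (real x)))) \<longlonglongrightarrow> 0"
    by real_asymp
  then have "\<forall>\<^sub>F x in sequentially. sqrt (real x) / real x + 2 * ln 4 / ln (real x)
      + c * (ln (real x) powr (9 / 20) / sqrt (ln (real x))) < \<epsilon>"
    using assms(2) by (rule order_tendstoD)
  moreover have "\<forall>\<^sub>F x in sequentially. x \<ge> 3"
    by (rule eventually_ge_at_top)
  ultimately show ?thesis
    by eventually_elim (use c in \<open>fastforce simp: add.assoc\<close>)
qed

theorem corollary6p11:
  shows "(\<lambda>x. real (card {n\<in>{1..x}. s_practical n}) / real x) \<longlonglongrightarrow> 0"
proof (rule LIMSEQ_I)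
  fix r :: real assume "r > 0"
  then obtain Y :: nat where "Y > 0" "inverse (real Y) < r / 6"
    using ex_inverse_of_nat_less[of "r / 6"] by auto
  then have "Y \<ge> 1" "3 / real Y < r / 2"
    by (simp_all add: field_simps)
  then have "\<forall>\<^sub>F x in sequentially. real (card {n\<in>{1..x}. s_practical n}) / real x < r"
    using s_practical_density_eventually_less[of Y "r / 2"] \<open>r > 0\<close> by (auto elim: eventually_mono)
  then show "\<exists>N. \<forall>x\<ge>N. norm (real (card {n\<in>{1..x}. s_practical n}) / real x - 0) < r"
    by (simp add: eventually_sequentially)
qed

end
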